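(* In the one-way trading setting with price elasticity, let $\pi\ge1$. For every input $\sigma=(g_1,\dots,g_T)$ and every $t\in[T]$, the output of CR-Pursuit($\pi$) satisfies $$\bar v_t\ \le\ c\,\frac{g_t(\bar v_t)}{p(t)},\qquad c=\frac{2}{1+\sqrt{1-1/\pi}}.$$
   Context: Fix $\Delta>0$, $0<m\le M$. Let $\mathcal G_{PE}$ be the set of functions $g(v)=(p-f(v))\,v$ on $[0,\Delta]$, where $p\in[m,M]$ and $f:[0,\Delta]\to[0,\infty)$ is convex and differentiable with $f(0)=0$ (so $g$ is concave, $g(0)=0$, $g'(0)=p$; $g$ need not be increasing). An input is a finite sequence $\sigma=(g_1,\dots,g_T)$ with $g_t(v)=(p(t)-f_t(v))v\in\mathcal G_{PE}$; $\sigma^{[1:t]}=(g_1,\dots,g_t)$ ($\sigma^{[1:0]}$ empty). $\eta_{OPT}(\sigma^{[1:t]})$ is the optimal value of $\max\sum_{s=1}^t g_s(v_s)$ s.t. $\sum_{s=1}^t v_s\le\Delta$, $v_s\ge0$ (and $0$ for the empty sequence). For $\pi\ge1$, CR-Pursuit($\pi$) outputs at time $t$ the smallest $\bar v_t\in[0,\Delta]$ with $g_t(\bar v_t)=\frac1\pi\big[\eta_{OPT}(\sigma^{[1:t]})-\eta_{OPT}(\sigma^{[1:t-1]})\big]$ (such a value exists since the right side lies between $0$ and $\max_{[0,\Delta]}g_t$). *)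

theory Defs
  imports "HOL-Analysis.Analysis"
begin

text \<open>Membership of g(v) = (p - f v) v in G_PE, described by the pair (p, f).\<close>
definition in_GPE :: "real \<Rightarrow> real \<Rightarrow> real \<Rightarrow> real \<Rightarrow> (real \<Rightarrow> real) \<Rightarrow> bool" where
  "in_GPE \<Delta> m M p f \<longleftrightarrow> m \<le> p \<and> p \<le> M \<and> convex_on {0..\<Delta>} f \<and>
      f differentiable_on {0..\<Delta>} \<and> f 0 = 0 \<and> (\<forall>v\<in>{0..\<Delta>}. 0 \<le> f v)"

definition gPE :: "real \<Rightarrow> (real \<Rightarrow> real) \<Rightarrow> real \<Rightarrow> real" where
  "gPE p f v = (p - f v) * v"

text \<open>Offline optimum on the prefix g_1..g_t (t = 0: empty prefix, value 0).\<close>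
definition eta_OPT :: "real \<Rightarrow> (nat \<Rightarrow> real \<Rightarrow> real) \<Rightarrow> nat \<Rightarrow> real" where
  "eta_OPT \<Delta> g t = Sup {(\<Sum>s=1..t. g s (v s)) | v :: nat \<Rightarrow> real.
       (\<forall>s\<in>{1..t}. 0 \<le> v s) \<and> (\<Sum>s=1..t. v s) \<le> \<Delta>}"

definition cr_pursuit :: "real \<Rightarrow> real \<Rightarrow> (nat \<Rightarrow> real \<Rightarrow> real) \<Rightarrow> nat \<Rightarrow> real" where
  "cr_pursuit \<Delta> \<pi> g t = (LEAST v. v \<in> {0..\<Delta>} \<and>
       g t v = (eta_OPT \<Delta> g t - eta_OPT \<Delta> g (t - 1)) / \<pi>)"

end

theory Submission imports Defs begin

text \<open>Since the offline optimum can only gain at most \<open>max g\<^sub>t\<close> when \<open>g\<^sub>t\<close> arrives, the target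
  level \<open>Y\<close> of CR-Pursuit satisfies \<open>\<pi> Y \<le> max g\<^sub>t\<close>. Let \<open>v\<close> be the least point with \<open>g\<^sub>t v = Y\<close>
  and \<open>F = f\<^sub>t v\<close>. Convexity of \<open>f\<^sub>t\<close> with \<open>f\<^sub>t 0 = 0\<close> compares \<open>g\<^sub>t\<close> with the parabola
  \<open>(p - (F/v) z) z\<close>: above it before \<open>v\<close>, below it after \<open>v\<close>. As \<open>g\<^sub>t < Y\<close> before \<open>v\<close>, this
  forces \<open>2F \<le> p\<close> and \<open>max g\<^sub>t \<le> p\<^sup>2 v / (4F)\<close>, so \<open>4\<pi> F (p - F) \<le> p\<^sup>2\<close>; solving this quadratic
  inequality for \<open>F/p \<le> 1/2\<close> gives \<open>p \<le> c (p - F)\<close>, i.e. \<open>v \<le> c g\<^sub>t(v) / p\<close>.\<close>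

definition allocations :: "real \<Rightarrow> nat \<Rightarrow> (nat \<Rightarrow> real) set" where
  "allocations \<Delta> n = {v. (\<forall>s\<in>{1..n}. 0 \<le> v s) \<and> (\<Sum>s=1..n. v s) \<le> \<Delta>}"

lemma eta_OPT_eq_Sup_allocations:
  "eta_OPT \<Delta> g n = Sup ((\<lambda>v. \<Sum>s=1..n. g s (v s)) ` allocations \<Delta> n)"
  unfolding eta_OPT_def allocations_def by (simp add: setcompr_eq_image)

lemma allocation_le_budget:
  assumes "v \<in> allocations \<Delta> n" "s \<in> {1..n}"
  shows "v s \<le> \<Delta>"
proof -
  have "v s \<le> (\<Sum>s=1..n. v s)"
    by (rule member_le_sum) (use assms in \<open>auto simp: allocations_def\<close>)
  thus ?thesis using assms(1) by (simp add: allocations_def)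
qed

lemma zero_in_allocations: "0 \<le> \<Delta> \<Longrightarrow> (\<lambda>_. 0) \<in> allocations \<Delta> n"
  by (simp add: allocations_def)

lemma bdd_above_allocation_values:
  fixes g :: "nat \<Rightarrow> real \<Rightarrow> real"
  assumes "\<forall>s\<in>{1..n}. \<forall>x\<in>{0..\<Delta>}. g s x \<le> B"
  shows "bdd_above ((\<lambda>v. \<Sum>s=1..n. g s (v s)) ` allocations \<Delta> n)"
proof (rule bdd_aboveI2)
  fix v assume v: "v \<in> allocations \<Delta> n"
  have "(\<Sum>s=1..n. g s (v s)) \<le> (\<Sum>s=1..n. B)"
    by (rule sum_mono) (use assms v allocation_le_budget[OF v] in \<open>auto simp: allocations_def\<close>)
  thus "(\<Sum>s=1..n. g s (v s)) \<le> real n * B" by simp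
qed

lemma eta_OPT_le_Suc:
  fixes g :: "nat \<Rightarrow> real \<Rightarrow> real"
  assumes "0 \<le> \<Delta>" "g (Suc k) 0 = 0" "\<forall>s\<in>{1..Suc k}. \<forall>x\<in>{0..\<Delta>}. g s x \<le> B"
  shows "eta_OPT \<Delta> g k \<le> eta_OPT \<Delta> g (Suc k)"
  unfolding eta_OPT_eq_Sup_allocations
proof (rule cSup_mono)
  show "(\<lambda>v. \<Sum>s=1..k. g s (v s)) ` allocations \<Delta> k \<noteq> {}"
    using zero_in_allocations[OF assms(1)] by blast
  show "bdd_above ((\<lambda>v. \<Sum>s=1..Suc k. g s (v s)) ` allocations \<Delta> (Suc k))"
    by (rule bdd_above_allocation_values[OF assms(3)])
  fix b assume "b \<in> (\<lambda>v. \<Sum>s=1..k. g s (v s)) ` allocations \<Delta> k"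
  then obtain v where b: "b = (\<Sum>s=1..k. g s (v s))" and v: "v \<in> allocations \<Delta> k" by blast
  define v' where "v' = v(Suc k := 0)"
  have "(\<Sum>s=1..k. v' s) = (\<Sum>s=1..k. v s)" "(\<Sum>s=1..k. g s (v' s)) = b"
    unfolding b by (auto intro!: sum.cong simp: v'_def)
  hence "v' \<in> allocations \<Delta> (Suc k)" "b = (\<Sum>s=1..Suc k. g s (v' s))"
    using v assms(2) by (auto simp: allocations_def v'_def sum.cl_ivl_Suc le_Suc_eq)
  thus "\<exists>a\<in>(\<lambda>v. \<Sum>s=1..Suc k. g s (v s)) ` allocations \<Delta> (Suc k). b \<le> a" by blast
qed

lemma eta_OPT_Suc_le:
  fixes g :: "nat \<Rightarrow> real \<Rightarrow> real"
  assumes "0 \<le> \<Delta>" "\<forall>x\<in>{0..\<Delta>}. g (Suc k) x \<le> G" "\<forall>s\<in>{1..k}. \<forall>x\<in>{0..\<Delta>}. g s x \<le> B"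
  shows "eta_OPT \<Delta> g (Suc k) \<le> eta_OPT \<Delta> g k + G"
  unfolding eta_OPT_eq_Sup_allocations
proof (rule cSup_least)
  show "(\<lambda>v. \<Sum>s=1..Suc k. g s (v s)) ` allocations \<Delta> (Suc k) \<noteq> {}"
    using zero_in_allocations[OF assms(1)] by blast
  fix x assume "x \<in> (\<lambda>v. \<Sum>s=1..Suc k. g s (v s)) ` allocations \<Delta> (Suc k)"
  then obtain v where x: "x = (\<Sum>s=1..Suc k. g s (v s))" and v: "v \<in> allocations \<Delta> (Suc k)"
    by blast
  have "0 \<le> v (Suc k)" "(\<Sum>s=1..k. v s) + v (Suc k) \<le> \<Delta>"
    using v by (auto simp: allocations_def sum.cl_ivl_Suc)
  hence "(\<Sum>s=1..k. v s) \<le> \<Delta>" by linarith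
  hence "v \<in> allocations \<Delta> k" using v by (auto simp: allocations_def)
  hence "(\<Sum>s=1..k. g s (v s)) \<le> Sup ((\<lambda>v. \<Sum>s=1..k. g s (v s)) ` allocations \<Delta> k)"
    using bdd_above_allocation_values[OF assms(3)] by (intro cSup_upper) auto
  moreover have "g (Suc k) (v (Suc k)) \<le> G"
    using assms(2) allocation_le_budget[OF v, of "Suc k"] v by (auto simp: allocations_def)
  ultimately show "x \<le> Sup ((\<lambda>v. \<Sum>s=1..k. g s (v s)) ` allocations \<Delta> k) + G"
    using x by (simp add: sum.cl_ivl_Suc)
qed

lemma least_level_point:
  fixes g :: "real \<Rightarrow> real"
  assumes cont: "continuous_on {0..\<Delta>} g" and g0: "g 0 = 0" and Y: "0 \<le> Y"
    and z: "z \<in> {0..\<Delta>}" "Y \<le> g z"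
  defines "v \<equiv> LEAST v. v \<in> {0..\<Delta>} \<and> g v = Y"
  shows "v \<in> {0..\<Delta>}" "g v = Y" "\<And>w. 0 \<le> w \<Longrightarrow> w < v \<Longrightarrow> g w < Y"
proof -
  have IVT_below: "\<exists>x. 0 \<le> x \<and> x \<le> b \<and> g x = Y" if "b \<in> {0..\<Delta>}" "Y \<le> g b" for b
    by (rule IVT') (use that g0 Y in \<open>auto intro: continuous_on_subset[OF cont]\<close>)
  define S where "S = {v\<in>{0..\<Delta>}. g v = Y}"
  have "S \<noteq> {}" using IVT_below[OF z] z unfolding S_def by fastforce
  moreover have "closed S"
    using continuous_closed_preimage[OF cont, of "{Y}"] by (simp add: S_def vimage_def Int_def)
  moreover have "bdd_below S" by (auto simp: S_def intro: bdd_belowI[of _ 0])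
  ultimately have "Inf S \<in> S" "\<And>x. x \<in> S \<Longrightarrow> Inf S \<le> x"
    by (auto intro: closed_contains_Inf cInf_lower)
  moreover from this have "v = Inf S" unfolding v_def S_def by (intro Least_equality) auto
  ultimately have v_least: "\<And>x. x \<in> S \<Longrightarrow> v \<le> x" and "v \<in> S" by auto
  thus v: "v \<in> {0..\<Delta>}" "g v = Y" by (auto simp: S_def)
  fix w assume w: "0 \<le> w" "w < v"
  have "g w \<noteq> Y" using v_least[of w] w v by (auto simp: S_def)
  moreover have "\<not> Y < g w"
  proof
    assume "Y < g w"
    then obtain x where "0 \<le> x" "x \<le> w" "g x = Y" using IVT_below[of w] w v by auto
    thus False using v_least[of x] w v by (auto simp: S_def)
  qed
  ultimately show "g w < Y" by linarith
qed

lemma convex_on_vanishing_at_0_chord: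
  fixes f :: "real \<Rightarrow> real"
  assumes "convex_on {0..\<Delta>} f" "f 0 = 0" "0 \<le> a" "a \<le> b" "b \<le> \<Delta>"
  shows "b * f a \<le> a * f b"
proof (cases "b = 0")
  case False
  hence "f ((1 - a/b) *\<^sub>R 0 + (a/b) *\<^sub>R b) \<le> (1 - a/b) * f 0 + (a/b) * f b"
    using assms by (intro convex_onD[OF assms(1)]) auto
  thus ?thesis using assms False by (simp add: field_simps)
qed (use assms in auto)

lemma parabola_le_peak:
  fixes p q z :: real
  assumes "q > 0"
  shows "(p - q * z) * z \<le> p\<^sup>2 / (4 * q)"
proof -
  have "0 \<le> (p - 2 * q * z)\<^sup>2" by simp
  thus ?thesis using assms by (simp add: field_simps power2_eq_square)
qed

locale level_point =
  fixes \<Delta> p v :: real and f :: "real \<Rightarrow> real"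
  assumes convex: "convex_on {0..\<Delta>} f" and f0: "f 0 = 0"
    and point: "0 < v" "v \<le> \<Delta>" and price_pos: "0 < p" and value_pos: "0 < f v"
    and below: "\<And>w. 0 \<le> w \<Longrightarrow> w < v \<Longrightarrow> gPE p f w \<le> gPE p f v"
begin

definition slope :: real where "slope = f v / v"

lemma slope_pos: "0 < slope"
  using point value_pos by (simp add: slope_def)

lemma parabola_le_before:
  assumes "0 \<le> w" "w \<le> v"
  shows "(p - slope * w) * w \<le> gPE p f w"
proof -
  have "f w \<le> slope * w"
    using convex_on_vanishing_at_0_chord[OF convex f0 assms] point by (simp add: slope_def field_simps)
  thus ?thesis using assms(1) by (simp add: gPE_def mult_right_mono)
qed

lemma after_le_parabola:
  assumes "v \<le> z" "z \<le> \<Delta>"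
  shows "gPE p f z \<le> (p - slope * z) * z"
proof -
  have "slope * z \<le> f z"
    using convex_on_vanishing_at_0_chord[OF convex f0 _ assms] point by (simp add: slope_def field_simps)
  thus ?thesis using assms point by (simp add: gPE_def mult_right_mono)
qed

lemma double_value_le_price: "2 * f v \<le> p"
proof (rule ccontr)
  assume "\<not> 2 * f v \<le> p"
  \<comment> \<open>then the vertex \<open>w\<close> of the parabola lies before \<open>v\<close>, so its peak is at most \<open>g v\<close>\<close>
  define w where "w = p / (2 * slope)"
  have w: "0 \<le> w" "w < v"
    using slope_pos price_pos point \<open>\<not> 2 * f v \<le> p\<close> by (auto simp: w_def slope_def field_simps)
  have "p\<^sup>2 / (4 * slope) = (p - slope * w) * w"
    using slope_pos by (simp add: w_def field_simps power2_eq_square)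
  also have "\<dots> \<le> gPE p f v" using parabola_le_before[of w] below[OF w] w by simp
  also have "gPE p f v = (p - slope * v) * v" using point by (simp add: gPE_def slope_def)
  finally have "0 \<le> - (p - 2 * slope * v)\<^sup>2"
    using slope_pos by (simp add: field_simps power2_eq_square)
  hence "p = 2 * f v" using point by (simp add: slope_def)
  thus False using \<open>\<not> 2 * f v \<le> p\<close> by simp
qed

lemma value_le_peak:
  assumes "z \<in> {0..\<Delta>}"
  shows "4 * f v * gPE p f z \<le> p\<^sup>2 * v"
proof -
  have "gPE p f z \<le> p\<^sup>2 / (4 * slope)"
  proof (cases "z < v")
    case True
    have "gPE p f z \<le> gPE p f v" using below True assms by auto
    also have "\<dots> = (p - slope * v) * v" using point by (simp add: gPE_def slope_def)
    finally show ?thesis using parabola_le_peak[OF slope_pos, of p v] by linarith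
  next
    case False
    hence "gPE p f z \<le> (p - slope * z) * z" using after_le_parabola assms by simp
    thus ?thesis using parabola_le_peak[OF slope_pos, of p z] by linarith
  qed
  thus ?thesis using point value_pos by (simp add: slope_def field_simps)
qed

end

lemma price_le_ratio_times_margin:
  fixes p F \<pi> :: real
  assumes "0 < p" "0 \<le> F" "2 * F \<le> p" "1 \<le> \<pi>" "4 * \<pi> * F * (p - F) \<le> p\<^sup>2"
  shows "p \<le> 2 / (1 + sqrt (1 - 1 / \<pi>)) * (p - F)"
proof -
  define s where "s = sqrt (1 - 1 / \<pi>)"
  have s: "0 \<le> s" "s\<^sup>2 = 1 - 1 / \<pi>" using assms(4) by (auto simp: s_def)
  have "4 * F * (p - F) * \<pi> \<le> p\<^sup>2" using assms(5) by (simp add: mult_ac)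
  hence "4 * F * (p - F) \<le> p\<^sup>2 / \<pi>" using assms(4) by (subst pos_le_divide_eq) auto
  moreover have "(p * s)\<^sup>2 = p\<^sup>2 - p\<^sup>2 / \<pi>" by (simp add: power_mult_distrib s(2) right_diff_distrib)
  moreover have "(p - 2 * F)\<^sup>2 = p\<^sup>2 - 4 * F * (p - F)" by (simp add: power2_eq_square algebra_simps)
  ultimately have "(p * s)\<^sup>2 \<le> (p - 2 * F)\<^sup>2" by linarith
  hence "p * s \<le> p - 2 * F" by (rule power2_le_imp_le) (use assms(3) in simp)
  hence "p \<le> 2 / (1 + s) * (p - F)" using s(1) by (simp add: field_simps)
  thus ?thesis by (simp add: s_def)
qed

lemma least_level_point_bound:
  fixes \<Delta> p \<pi> Y z :: real and f :: "real \<Rightarrow> real"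
  assumes p: "0 < p" and \<pi>: "1 \<le> \<pi>"
    and convex: "convex_on {0..\<Delta>} f" and cont: "continuous_on {0..\<Delta>} f" and f0: "f 0 = 0"
    and f_nonneg: "\<forall>v\<in>{0..\<Delta>}. 0 \<le> f v"
    and Y: "0 \<le> Y" and z: "z \<in> {0..\<Delta>}" and target: "\<pi> * Y \<le> gPE p f z"
  defines "v \<equiv> LEAST v. v \<in> {0..\<Delta>} \<and> gPE p f v = Y"
  shows "v \<le> 2 / (1 + sqrt (1 - 1 / \<pi>)) * gPE p f v / p"
proof -
  have g_cont: "continuous_on {0..\<Delta>} (gPE p f)"
    unfolding gPE_def by (intro continuous_intros cont)
  have "Y \<le> \<pi> * Y" using mult_right_mono[OF \<pi> Y] by simp
  note level = least_level_point[OF g_cont _ Y z, unfolded v_def[symmetric]]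
  have v: "v \<in> {0..\<Delta>}" "gPE p f v = Y" "\<And>w. 0 \<le> w \<Longrightarrow> w < v \<Longrightarrow> gPE p f w < Y"
    using level \<open>Y \<le> \<pi> * Y\<close> target by (auto simp: gPE_def)
  show ?thesis
  proof (cases "v = 0")
    case True
    thus ?thesis by (simp add: gPE_def)
  next
    case False
    have "p \<le> 2 / (1 + sqrt (1 - 1 / \<pi>)) * (p - f v)"
    proof (cases "f v = 0")
      case True
      thus ?thesis using price_le_ratio_times_margin[OF p _ _ \<pi>, of 0] p by simp
    next
      case False
      then interpret level_point \<Delta> p v f
        using v \<open>v \<noteq> 0\<close> convex f0 p f_nonneg by unfold_locales (auto simp: order.order_iff_strict)
      have "\<pi> * ((p - f v) * v) \<le> gPE p f z" using target v(2) by (simp add: gPE_def)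
      hence "4 * f v * (\<pi> * ((p - f v) * v)) \<le> 4 * f v * gPE p f z"
        using value_pos by (intro mult_left_mono) auto
      hence "(4 * \<pi> * f v * (p - f v)) * v \<le> p\<^sup>2 * v"
        using value_le_peak[OF z] by (simp add: algebra_simps)
      hence "4 * \<pi> * f v * (p - f v) \<le> p\<^sup>2" using point by (simp add: mult_le_cancel_right_pos)
      thus ?thesis using price_le_ratio_times_margin[OF p _ double_value_le_price \<pi>] value_pos by simp
    qed
    hence "p * v \<le> 2 / (1 + sqrt (1 - 1 / \<pi>)) * (p - f v) * v"
      using v(1) by (intro mult_right_mono) auto
    thus ?thesis unfolding gPE_def using p by (subst pos_le_divide_eq) (auto simp: mult_ac)
  qed
qed

theorem lemma14:
  fixes \<Delta> m M \<pi> :: real and T :: nat and p :: "nat \<Rightarrow> real" and f :: "nat \<Rightarrow> real \<Rightarrow> real"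
  assumes "\<Delta> > 0" and "0 < m" and "m \<le> M" and "\<pi> \<ge> 1"
    and "\<forall>s\<in>{1..T}. in_GPE \<Delta> m M (p s) (f s)"
    and "t \<in> {1..T}"
  shows "cr_pursuit \<Delta> \<pi> (\<lambda>s. gPE (p s) (f s)) t
     \<le> (2 / (1 + sqrt (1 - 1 / \<pi>))) *
        gPE (p t) (f t) (cr_pursuit \<Delta> \<pi> (\<lambda>s. gPE (p s) (f s)) t) / p t"
proof -
  define g where "g = (\<lambda>s. gPE (p s) (f s))"
  obtain k where k: "t = Suc k" "k < T" using assms(6) by (cases t) auto
  have G: "in_GPE \<Delta> m M (p t) (f t)" using assms(5,6) by auto
  hence f_cont: "continuous_on {0..\<Delta>} (f t)"
    by (auto simp: in_GPE_def differentiable_imp_continuous_on)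
  have "continuous_on {0..\<Delta>} (g t)" unfolding g_def gPE_def by (intro continuous_intros f_cont)
  then obtain z where z: "z \<in> {0..\<Delta>}" "\<forall>y\<in>{0..\<Delta>}. g t y \<le> g t z"
    using continuous_attains_sup[of "{0..\<Delta>}" "g t"] assms(1) by auto
  have bounded: "\<forall>s\<in>{1..T}. \<forall>x\<in>{0..\<Delta>}. g s x \<le> M * \<Delta>"
  proof (intro ballI)
    fix s x assume s: "s \<in> {1..T}" and x: "x \<in> {0..\<Delta>}"
    have "p s \<le> M" "0 \<le> f s x" using assms(5) s x by (auto simp: in_GPE_def)
    thus "g s x \<le> M * \<Delta>" using x assms(2,3) by (auto simp: g_def gPE_def intro!: mult_mono)
  qed
  have "eta_OPT \<Delta> g k \<le> eta_OPT \<Delta> g t" "eta_OPT \<Delta> g t \<le> eta_OPT \<Delta> g k + g t z"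
    using eta_OPT_le_Suc[of \<Delta> g k "M * \<Delta>"] eta_OPT_Suc_le[of \<Delta> g k "g t z" "M * \<Delta>"]
      bounded z k assms(1) by (auto simp: g_def gPE_def)
  hence "0 \<le> (eta_OPT \<Delta> g t - eta_OPT \<Delta> g (t - 1)) / \<pi>"
    "\<pi> * ((eta_OPT \<Delta> g t - eta_OPT \<Delta> g (t - 1)) / \<pi>) \<le> gPE (p t) (f t) z"
    using k assms(4) by (auto simp: g_def)
  thus ?thesis
    using least_level_point_bound[OF _ assms(4) _ f_cont _ _ _ z(1)] G assms(2)
    by (simp add: cr_pursuit_def g_def in_GPE_def)
qed

end
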